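(* Let $n \geq 1$ and $m \geq 2$ be integers and let $p=(p_1,\dots,p_m)$ be a probability distribution on $\{1,\dots,m\}$. Throw $n$ balls independently into $m$ bins, each ball landing in bin $i$ with probability $p_i$, and let $M_n$ be the maximum load of any bin. Let $k^* \in [1,\infty)$ be the solution of $\frac{k^*}{\|p\|_{k^*}} = n$, where $\|p\|_k = \left(\sum_{i=1}^m p_i^k\right)^{1/k}$ for real $k \geq 1$. Then for every $\delta \in (0,1)$: \[ \Pr\left[M_n \geq \left(\tfrac{e}{\delta}\right) k^*\right] \leq \delta \] and \[ \Pr\left[M_n \geq \frac{k^*}{\max\left\{e^2,\ 2\ln(\tfrac{1}{\delta})\right\}}\right] \geq 1-\delta. \]
   Context: The load of a bin is the number of balls that landed in it. *)

theory Defs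
  imports "HOL-Probability.Probability"
begin

definition load :: "nat \<Rightarrow> (nat \<Rightarrow> nat) \<Rightarrow> nat \<Rightarrow> nat" where
  "load n f i = card {j \<in> {..<n}. f j = i}"

definition max_load :: "nat \<Rightarrow> nat \<Rightarrow> (nat \<Rightarrow> nat) \<Rightarrow> nat" where
  "max_load n m f = Max ((load n f) ` {1..m})"

definition pnorm :: "nat \<Rightarrow> nat pmf \<Rightarrow> real \<Rightarrow> real" where
  "pnorm m P k = (\<Sum>i=1..m. pmf P i powr k) powr (1 / k)"

definition balls_pmf :: "nat \<Rightarrow> nat pmf \<Rightarrow> (nat \<Rightarrow> nat) pmf" where
  "balls_pmf n P = Pi_pmf {..<n} 0 (\<lambda>_. P)"

end

theory Submission
  imports Defs
begin

(* Write nu = k/n, so that ||p||_k = nu.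
   Upper tail: a union bound over the bins and over the T-sets of balls gives
   P[M >= T] <= C(n,T) * sum_i p_i^T.  Since p_i <= nu and T >= k, the sum is at most nu^T,
   so P[M >= T] <= (e n nu / T)^T = (e k / T)^T <= delta^T for T = ceil(e k / delta).
   Lower tail: let C = max(e^2, 2 ln(1/delta)) and s = k/C.  The events "load_i < s" are
   negatively correlated (add the balls one at a time), so P[M < s] <= prod_i P[load_i < s].
   Each factor is at most exp(-(C/2) (n p_i / k)^k): for heavy bins (n p_i >= 2s) by a
   Chernoff bound, for light bins already through the point probability P[load_i = ceil s].
   By the choice of k these exponents add up to C/2, and exp(-C/2) <= delta. *)

section \<open>Throwing the balls one at a time\<close>

lemma balls_pmf_Suc:
  "balls_pmf (Suc n) P = do {y \<leftarrow> P; f \<leftarrow> balls_pmf n P; return_pmf (f(n := y))}"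
  unfolding balls_pmf_def lessThan_Suc by (rule Pi_pmf_insert') auto

lemma load_fun_upd_last:
  "load (Suc n) (f(n := y)) = (\<lambda>i. load n f i + (if y = i then 1 else 0))"
proof
  fix i
  have "{j \<in> {..<Suc n}. (f(n := y)) j = i} = {j \<in> {..<n}. f j = i} \<union> (if y = i then {n} else {})"
    by (auto simp: less_Suc_eq)
  then show "load (Suc n) (f(n := y)) i = load n f i + (if y = i then 1 else 0)"
    unfolding load_def by (simp add: card_insert_if)
qed

lemma set_pmf_balls_pmf: "set_pmf (balls_pmf n P) = PiE_dflt {..<n} 0 (\<lambda>_. set_pmf P)"
  unfolding balls_pmf_def by (subst set_Pi_pmf) (auto simp: o_def)

lemma finite_set_pmf_balls_pmf: "finite (set_pmf P) \<Longrightarrow> finite (set_pmf (balls_pmf n P))"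
  unfolding set_pmf_balls_pmf by (intro finite_PiE_dflt) auto

lemma measure_bind_pmf_finite:
  assumes "finite (set_pmf M)"
  shows "measure_pmf.prob (bind_pmf M N) X = (\<Sum>x\<in>set_pmf M. pmf M x * measure_pmf.prob (N x) X)"
proof -
  have "emeasure (measure_pmf (bind_pmf M N)) X = (\<Sum>x\<in>set_pmf M. emeasure (N x) X * pmf M x)"
    using assms by (simp add: nn_integral_measure_pmf_finite)
  also have "\<dots> = ennreal (\<Sum>x\<in>set_pmf M. pmf M x * measure_pmf.prob (N x) X)"
    by (subst sum_ennreal[symmetric])
       (auto simp: measure_pmf.emeasure_eq_measure ennreal_mult' mult.commute)
  finally show ?thesis
    by (simp add: measure_pmf.emeasure_eq_measure sum_nonneg)
qed

lemma prob_balls_pmf_Suc: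
  assumes "finite (set_pmf P)"
  shows "measure_pmf.prob (balls_pmf (Suc n) P) {f. \<Phi> (load (Suc n) f)} =
    (\<Sum>y\<in>set_pmf P. pmf P y *
       measure_pmf.prob (balls_pmf n P) {f. \<Phi> (\<lambda>i. load n f i + (if y = i then 1 else 0))})"
proof -
  have "measure_pmf.prob (map_pmf (\<lambda>f. f(n := y)) (balls_pmf n P)) {f. \<Phi> (load (Suc n) f)} =
        measure_pmf.prob (balls_pmf n P) {f. \<Phi> (\<lambda>i. load n f i + (if y = i then 1 else 0))}" for y
    by (simp add: load_fun_upd_last vimage_def)
  then show ?thesis
    unfolding balls_pmf_Suc using assms by (simp add: measure_bind_pmf_finite map_pmf_def)
qed

lemma prob_load_Suc:
  assumes "finite (set_pmf P)"
  shows "measure_pmf.prob (balls_pmf (Suc n) P) {f. \<Phi> (load (Suc n) f i)} =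
    pmf P i * measure_pmf.prob (balls_pmf n P) {f. \<Phi> (load n f i + 1)} +
    (1 - pmf P i) * measure_pmf.prob (balls_pmf n P) {f. \<Phi> (load n f i)}"
proof -
  define A where "A = measure_pmf.prob (balls_pmf n P) {f. \<Phi> (load n f i + 1)}"
  define B where "B = measure_pmf.prob (balls_pmf n P) {f. \<Phi> (load n f i)}"
  have "measure_pmf.prob (balls_pmf (Suc n) P) {f. \<Phi> (load (Suc n) f i)} =
      (\<Sum>y\<in>set_pmf P. pmf P y * B + (if y = i then pmf P i * (A - B) else 0))"
    using prob_balls_pmf_Suc[OF assms, where \<Phi> = "\<lambda>L. \<Phi> (L i)"]
    by (auto simp: A_def B_def algebra_simps intro!: sum.cong)
  also have "\<dots> = B + pmf P i * (A - B)"
    using assms by (simp add: sum.distrib sum_distrib_right[symmetric] sum_pmf_eq_1 set_pmf_eq)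
  finally show ?thesis by (simp add: A_def B_def algebra_simps)
qed

lemma sum_pmf_prod_if_le_prod:
  fixes A B :: "'a \<Rightarrow> real"
  assumes "finite I" "finite (set_pmf P)" "\<And>i. 0 \<le> A i" "\<And>i. A i \<le> B i"
  shows "(\<Sum>y\<in>set_pmf P. pmf P y * (\<Prod>i\<in>I. if i = y then A i else B i))
           \<le> (\<Prod>i\<in>I. pmf P i * A i + (1 - pmf P i) * B i)"
  using assms(1)
proof (induction I rule: finite_induct)
  case empty
  then show ?case using assms(2) by (simp add: sum_pmf_eq_1)
next
  case (insert j I)
  define L where "L = (\<Sum>y\<in>set_pmf P. pmf P y * (\<Prod>i\<in>I. if i = y then A i else B i))"
  define R where "R = (\<Prod>i\<in>I. pmf P i * A i + (1 - pmf P i) * B i)"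
  have B_nonneg: "0 \<le> B i" for i using assms(3,4)[of i] by linarith
  have mix_bounds: "0 \<le> pmf P i * A i + (1 - pmf P i) * B i"
      "pmf P i * A i + (1 - pmf P i) * B i \<le> B i" for i
  proof -
    have "pmf P i * A i \<le> pmf P i * B i" using assms(4) by (rule mult_left_mono) simp
    moreover have "B i * pmf P i \<le> B i" using B_nonneg[of i] pmf_le_1[of P i] by (rule mult_left_le[rotated])
    moreover have "0 \<le> pmf P i * A i" using assms(3) by simp
    ultimately show "0 \<le> pmf P i * A i + (1 - pmf P i) * B i"
        "pmf P i * A i + (1 - pmf P i) * B i \<le> B i"
      by (simp_all add: algebra_simps)
  qed
  have R_bounds: "0 \<le> R" "R \<le> (\<Prod>i\<in>I. B i)"
    unfolding R_def using mix_bounds by (auto intro: prod_nonneg prod_mono)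
  have "(\<Sum>y\<in>set_pmf P. pmf P y * (\<Prod>i\<in>insert j I. if i = y then A i else B i))
      = (\<Sum>y\<in>set_pmf P. B j * (pmf P y * (\<Prod>i\<in>I. if i = y then A i else B i))
           - (if y = j then pmf P j * (B j - A j) * (\<Prod>i\<in>I. B i) else 0))"
  proof (intro sum.cong refl)
    fix y
    have "(\<Prod>i\<in>I. if i = j then A i else B i) = (\<Prod>i\<in>I. B i)"
      using insert.hyps(2) by (intro prod.cong) auto
    then show "pmf P y * (\<Prod>i\<in>insert j I. if i = y then A i else B i)
        = B j * (pmf P y * (\<Prod>i\<in>I. if i = y then A i else B i))
           - (if y = j then pmf P j * (B j - A j) * (\<Prod>i\<in>I. B i) else 0)"
      using insert.hyps by (simp add: algebra_simps)
  qed
  also have "\<dots> = B j * L - pmf P j * (B j - A j) * (\<Prod>i\<in>I. B i)"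
    using assms(2) by (simp add: L_def sum_subtractf sum_distrib_left set_pmf_iff)
  also have "\<dots> \<le> B j * R - pmf P j * (B j - A j) * R"
    using insert.IH R_bounds B_nonneg[of j] assms(4)[of j]
    by (intro diff_mono mult_left_mono) (auto simp: L_def R_def)
  also have "\<dots> = (pmf P j * A j + (1 - pmf P j) * B j) * R" by (simp add: algebra_simps)
  finally show ?case using insert.hyps by (simp add: R_def)
qed

(* Per-bin thresholds make the statement inductive: conditioning on the last ball lowers the
   threshold of the bin it lands in by one. *)
lemma prob_loads_below_le_prod:
  assumes "finite I" "finite (set_pmf P)"
  shows "measure_pmf.prob (balls_pmf n P) {f. \<forall>i\<in>I. real (load n f i) < s i}
     \<le> (\<Prod>i\<in>I. measure_pmf.prob (balls_pmf n P) {f. real (load n f i) < s i})"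
proof (induction n arbitrary: s)
  case 0
  have "balls_pmf 0 P = return_pmf (\<lambda>_. 0)" "\<And>f i. load 0 f i = 0"
    by (simp_all add: balls_pmf_def load_def)
  then show ?case by (simp add: indicator_def prod_nonneg)
next
  case (Suc n)
  define A where "A i = measure_pmf.prob (balls_pmf n P) {f. real (load n f i) < s i - 1}" for i
  define B where "B i = measure_pmf.prob (balls_pmf n P) {f. real (load n f i) < s i}" for i
  have shift: "(real (l + (if y = i then 1 else 0)) < s i) =
      (real l < s i - (if y = i then 1 else 0))" for l y i
    by auto
  have "measure_pmf.prob (balls_pmf (Suc n) P) {f. \<forall>i\<in>I. real (load (Suc n) f i) < s i}
     = (\<Sum>y\<in>set_pmf P. pmf P y * measure_pmf.prob (balls_pmf n P)
          {f. \<forall>i\<in>I. real (load n f i) < s i - (if y = i then 1 else 0)})"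
    using prob_balls_pmf_Suc[OF assms(2), where \<Phi> = "\<lambda>L. \<forall>i\<in>I. real (L i) < s i"]
    by (simp only: shift)
  also have "\<dots> \<le> (\<Sum>y\<in>set_pmf P. pmf P y * (\<Prod>i\<in>I. if i = y then A i else B i))"
  proof (intro sum_mono mult_left_mono pmf_nonneg)
    fix y
    have "measure_pmf.prob (balls_pmf n P)
          {f. \<forall>i\<in>I. real (load n f i) < s i - (if y = i then 1 else 0)}
        \<le> (\<Prod>i\<in>I. measure_pmf.prob (balls_pmf n P)
          {f. real (load n f i) < s i - (if y = i then 1 else 0)})"
      by (rule Suc.IH)
    also have "\<dots> = (\<Prod>i\<in>I. if i = y then A i else B i)"
      by (intro prod.cong) (auto simp: A_def B_def)
    finally show "measure_pmf.prob (balls_pmf n P)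
          {f. \<forall>i\<in>I. real (load n f i) < s i - (if y = i then 1 else 0)}
        \<le> (\<Prod>i\<in>I. if i = y then A i else B i)" .
  qed
  also have "\<dots> \<le> (\<Prod>i\<in>I. pmf P i * A i + (1 - pmf P i) * B i)"
    using assms unfolding A_def B_def
    by (intro sum_pmf_prod_if_le_prod) (auto intro!: measure_pmf.finite_measure_mono)
  also have "\<dots> = (\<Prod>i\<in>I. measure_pmf.prob (balls_pmf (Suc n) P) {f. real (load (Suc n) f i) < s i})"
  proof (intro prod.cong refl)
    fix i
    show "pmf P i * A i + (1 - pmf P i) * B i =
        measure_pmf.prob (balls_pmf (Suc n) P) {f. real (load (Suc n) f i) < s i}"
      using prob_load_Suc[OF assms(2), where \<Phi> = "\<lambda>l. real l < s i" and i = i]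
      by (simp add: A_def B_def less_diff_eq add.commute)
  qed
  finally show ?case .
qed

section \<open>The load of a single bin\<close>

lemma prob_balls_pmf_Pi:
  "measure_pmf.prob (balls_pmf n P) {f. \<forall>j<n. f j \<in> B j} = (\<Prod>j<n. measure_pmf.prob P (B j))"
proof -
  have "{f. \<forall>j<n. f j \<in> B j} = Pi {..<n} B" by (auto simp: Pi_def)
  then show ?thesis unfolding balls_pmf_def by (simp add: measure_Pi_pmf_Pi)
qed

lemma prob_balls_in_bin:
  assumes "A \<subseteq> {..<n}"
  shows "measure_pmf.prob (balls_pmf n P) {f. \<forall>j\<in>A. f j = i} = pmf P i ^ card A"
proof -
  have "{f. \<forall>j\<in>A. f j = i} = {f. \<forall>j<n. f j \<in> (if j \<in> A then {i} else UNIV)}"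
    using assms by auto
  then have "measure_pmf.prob (balls_pmf n P) {f. \<forall>j\<in>A. f j = i}
      = (\<Prod>j<n. measure_pmf.prob P (if j \<in> A then {i} else UNIV))"
    by (simp only: prob_balls_pmf_Pi)
  also have "\<dots> = (\<Prod>j<n. if j \<in> A then pmf P i else 1)"
    by (intro prod.cong) (auto simp: measure_pmf_single)
  also have "\<dots> = pmf P i ^ card A"
    using assms by (simp add: prod.If_cases Int_absorb1)
  finally show ?thesis .
qed

lemma prob_balls_in_bin_exactly:
  assumes "A \<subseteq> {..<n}"
  shows "measure_pmf.prob (balls_pmf n P) {f. \<forall>j<n. f j = i \<longleftrightarrow> j \<in> A}
     = pmf P i ^ card A * (1 - pmf P i) ^ (n - card A)"
proof -
  have compl: "measure_pmf.prob P (- {i}) = 1 - pmf P i"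
    using measure_pmf.prob_compl[of "{i}" P] by (simp add: measure_pmf_single Compl_eq_Diff_UNIV)
  have "{f. \<forall>j<n. f j = i \<longleftrightarrow> j \<in> A} = {f. \<forall>j<n. f j \<in> (if j \<in> A then {i} else - {i})}"
    by auto
  then have "measure_pmf.prob (balls_pmf n P) {f. \<forall>j<n. f j = i \<longleftrightarrow> j \<in> A}
      = (\<Prod>j<n. measure_pmf.prob P (if j \<in> A then {i} else - {i}))"
    by (simp only: prob_balls_pmf_Pi)
  also have "\<dots> = (\<Prod>j<n. if j \<in> A then pmf P i else 1 - pmf P i)"
    by (intro prod.cong) (auto simp: measure_pmf_single compl)
  also have "\<dots> = pmf P i ^ card A * (1 - pmf P i) ^ (n - card A)"
    using assms by (simp add: prod.If_cases Int_absorb1 card_Diff_subset finite_subset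
        Diff_eq[symmetric])
  finally show ?thesis .
qed

lemma prob_load_eq:
  "measure_pmf.prob (balls_pmf n P) {f. load n f i = S}
     = real (n choose S) * pmf P i ^ S * (1 - pmf P i) ^ (n - S)"
proof -
  define \<A> where "\<A> = {A. A \<subseteq> {..<n} \<and> card A = S}"
  define E where "E A = {f. \<forall>j<n. f j = i \<longleftrightarrow> j \<in> A}" for A
  have "{f. load n f i = S} = (\<Union>A\<in>\<A>. E A)"
  proof (intro equalityI subsetI)
    fix f assume "f \<in> {f. load n f i = S}"
    then have "{j \<in> {..<n}. f j = i} \<in> \<A>" "f \<in> E {j \<in> {..<n}. f j = i}"
      unfolding \<A>_def E_def load_def by auto
    then show "f \<in> (\<Union>A\<in>\<A>. E A)" by blast
  next
    fix f assume "f \<in> (\<Union>A\<in>\<A>. E A)"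
    then obtain A where "A \<in> \<A>" "f \<in> E A" by blast
    then have "{j \<in> {..<n}. f j = i} = A" unfolding \<A>_def E_def by auto
    with \<open>A \<in> \<A>\<close> show "f \<in> {f. load n f i = S}" unfolding load_def \<A>_def by simp
  qed
  moreover have "disjoint_family_on E \<A>"
    unfolding disjoint_family_on_def
  proof (intro ballI impI)
    fix A A' assume "A \<in> \<A>" "A' \<in> \<A>" "A \<noteq> A'"
    then obtain j where "j < n" "j \<in> A \<longleftrightarrow> j \<notin> A'" unfolding \<A>_def by blast
    then show "E A \<inter> E A' = {}" unfolding E_def by auto
  qed
  ultimately have "measure_pmf.prob (balls_pmf n P) {f. load n f i = S}
      = (\<Sum>A\<in>\<A>. measure_pmf.prob (balls_pmf n P) (E A))"
    by (simp add: measure_pmf.finite_measure_finite_Union \<A>_def)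
  also have "\<dots> = (\<Sum>A\<in>\<A>. pmf P i ^ S * (1 - pmf P i) ^ (n - S))"
    unfolding E_def by (intro sum.cong refl) (auto simp: \<A>_def prob_balls_in_bin_exactly)
  also have "\<dots> = real (n choose S) * pmf P i ^ S * (1 - pmf P i) ^ (n - S)"
    unfolding \<A>_def using n_subsets[of "{..<n}" S] by simp
  finally show ?thesis .
qed

lemma prob_load_ge_le:
  "measure_pmf.prob (balls_pmf n P) {f. T \<le> load n f i} \<le> real (n choose T) * pmf P i ^ T"
proof -
  define \<A> where "\<A> = {A. A \<subseteq> {..<n} \<and> card A = T}"
  have "{f. T \<le> load n f i} \<subseteq> (\<Union>A\<in>\<A>. {f. \<forall>j\<in>A. f j = i})"
  proof
    fix f assume "f \<in> {f. T \<le> load n f i}"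
    then have "T \<le> card {j \<in> {..<n}. f j = i}" by (simp add: load_def)
    then obtain A where "A \<subseteq> {j \<in> {..<n}. f j = i}" "card A = T"
      by (meson finite_Collect_conjI finite_lessThan obtain_subset_with_card_n)
    then show "f \<in> (\<Union>A\<in>\<A>. {f. \<forall>j\<in>A. f j = i})" unfolding \<A>_def by auto
  qed
  then have "measure_pmf.prob (balls_pmf n P) {f. T \<le> load n f i}
      \<le> measure_pmf.prob (balls_pmf n P) (\<Union>A\<in>\<A>. {f. \<forall>j\<in>A. f j = i})"
    by (intro measure_pmf.finite_measure_mono) auto
  also have "\<dots> \<le> (\<Sum>A\<in>\<A>. measure_pmf.prob (balls_pmf n P) {f. \<forall>j\<in>A. f j = i})"
    by (intro measure_pmf.finite_measure_subadditive_finite) (auto simp: \<A>_def)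
  also have "\<dots> = (\<Sum>A\<in>\<A>. pmf P i ^ T)"
    by (intro sum.cong refl) (auto simp: \<A>_def prob_balls_in_bin)
  also have "\<dots> = real (n choose T) * pmf P i ^ T"
    unfolding \<A>_def using n_subsets[of "{..<n}" T] by simp
  finally show ?thesis .
qed

lemma expectation_power_load:
  fixes a :: real
  assumes "finite (set_pmf P)" "0 \<le> a"
  shows "measure_pmf.expectation (balls_pmf n P) (\<lambda>f. a ^ load n f i) = (1 - (1 - a) * pmf P i) ^ n"
proof -
  have power_eq_prod: "a ^ load n f i = (\<Prod>j<n. if f j = i then a else 1)" for f
  proof -
    have "{..<n} \<inter> {j. f j = i} = {j \<in> {..<n}. f j = i}" by auto
    then show ?thesis unfolding load_def by (simp add: prod.If_cases)
  qed
  have "measure_pmf.expectation (balls_pmf n P) (\<lambda>f. a ^ load n f i)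
      = measure_pmf.expectation (Pi_pmf {..<n} 0 (\<lambda>_. P)) (\<lambda>f. \<Prod>j<n. if f j = i then a else 1)"
    unfolding balls_pmf_def power_eq_prod ..
  also have "\<dots> = (\<Prod>j<n. measure_pmf.expectation P (\<lambda>y. if y = i then a else 1))"
    by (rule expectation_prod_Pi_pmf) (use assms in \<open>auto simp: integrable_measure_pmf_finite\<close>)
  also have "measure_pmf.expectation P (\<lambda>y. if y = i then a else 1) = 1 - (1 - a) * pmf P i"
  proof -
    have "(\<lambda>y. if y = i then a else 1) = (\<lambda>y. 1 - (1 - a) * indicator {i} y)"
      by (auto simp: indicator_def)
    then show ?thesis
      by (simp add: integrable_measure_pmf_finite assms measure_pmf_single)
  qed
  finally show ?thesis by simp
qed

lemma prob_load_less_le_chernoff: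
  assumes "finite (set_pmf P)" "0 < a" "a \<le> 1"
  shows "measure_pmf.prob (balls_pmf n P) {f. real (load n f i) < s}
           \<le> exp (- (1 - a) * (real n * pmf P i)) / a powr s"
proof -
  have "{f. real (load n f i) < s} \<subseteq> {f \<in> space (balls_pmf n P). a powr s \<le> a ^ load n f i}"
    using assms(2,3) by (auto simp: powr_realpow[symmetric] intro: powr_mono')
  then have "measure_pmf.prob (balls_pmf n P) {f. real (load n f i) < s}
      \<le> measure_pmf.expectation (balls_pmf n P) (\<lambda>f. a ^ load n f i) / a powr s"
    using assms by (intro order.trans[OF measure_pmf.finite_measure_mono
          integral_Markov_inequality_measure[where A = "{}"]])
      (auto simp: integrable_measure_pmf_finite finite_set_pmf_balls_pmf)
  also have "\<dots> \<le> exp (- (1 - a) * pmf P i) ^ n / a powr s"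
  proof -
    have "(1 - a) * pmf P i \<le> 1 * 1" using assms by (intro mult_mono) (auto simp: pmf_le_1)
    moreover have "1 + - (1 - a) * pmf P i \<le> exp (- (1 - a) * pmf P i)"
      by (rule exp_ge_add_one_self)
    ultimately have "(1 - (1 - a) * pmf P i) ^ n \<le> exp (- (1 - a) * pmf P i) ^ n"
      by (intro power_mono) linarith+
    then show ?thesis
      using assms by (simp add: expectation_power_load divide_right_mono)
  qed
  also have "\<dots> = exp (- (1 - a) * (real n * pmf P i)) / a powr s"
    by (simp add: exp_of_nat_mult[symmetric] algebra_simps)
  finally show ?thesis .
qed

lemma sum_power_div_fact_le_exp:
  fixes x :: real
  assumes "0 \<le> x" "finite K"
  shows "(\<Sum>k\<in>K. x ^ k / fact k) \<le> exp x"
proof -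
  have "(\<Sum>k\<in>K. x ^ k /\<^sub>R fact k) \<le> (\<Sum>k. x ^ k /\<^sub>R fact k)"
    using exp_converges[of x] assms by (intro sum_le_suminf) (auto simp: sums_iff)
  then show ?thesis using exp_converges[of x] by (simp add: sums_iff divide_inverse mult.commute)
qed

lemma binomial_le_exp_mult_div_power:
  "real (n choose T) \<le> (exp 1 * n / T) ^ T"
proof (cases "T = 0")
  case False
  have "real ((n choose T) * fact T) \<le> real (n ^ T)"
    by (subst of_nat_le_iff) (rule binomial_fact_pow)
  then have "real (n choose T) \<le> real n ^ T / fact T"
    by (simp add: field_simps)
  also have "\<dots> = (n / T) ^ T * (real T ^ T / fact T)"
    using False by (simp add: power_divide)
  also have "\<dots> \<le> (n / T) ^ T * exp (real T)"
    using sum_power_div_fact_le_exp[of "real T" "{T}"] by (intro mult_left_mono) auto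
  also have "\<dots> = (exp 1 * n / T) ^ T"
    using exp_of_nat_mult[of T "1::real"] by (simp add: power_divide power_mult_distrib)
  finally show ?thesis .
qed simp

lemma sum_powr_le_scaled_sum_powr:
  fixes q :: "'a \<Rightarrow> real"
  assumes "\<And>i. i \<in> Y \<Longrightarrow> 0 \<le> q i" "\<And>i. i \<in> Y \<Longrightarrow> q i \<le> \<nu>" "k \<le> b"
  shows "(\<Sum>i\<in>Y. q i powr b) \<le> \<nu> powr (b - k) * (\<Sum>i\<in>Y. q i powr k)"
proof -
  have "q i powr b \<le> \<nu> powr (b - k) * q i powr k" if "i \<in> Y" for i
  proof -
    have "q i powr b = q i powr k * q i powr (b - k)" by (simp flip: powr_add)
    also have "\<dots> \<le> q i powr k * \<nu> powr (b - k)"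
      using assms that by (intro mult_left_mono powr_mono2) auto
    finally show ?thesis by (simp add: mult.commute)
  qed
  then show ?thesis by (simp add: sum_distrib_left sum_mono)
qed

lemma seven_le_exp_2: "7 \<le> exp (2::real)"
  using sum_power_div_fact_le_exp[of 2 "{..<5}"] by (simp add: numeral_eq_Suc)

lemma ln_2_le: "ln 2 \<le> (3/4::real)"
proof -
  have "2 \<le> exp (3/4::real)"
    using sum_power_div_fact_le_exp[of "3/4" "{..<4}"] by (simp add: numeral_eq_Suc)
  then have "ln 2 \<le> ln (exp (3/4::real))" by (subst ln_le_cancel_iff) auto
  then show ?thesis by simp
qed

lemma one_le_ln_7_div_2: "1 \<le> ln (7/2::real)"
  using e_less_272 by (subst ln_ge_iff) auto

lemma half_mult_powr_le_at_7:
  fixes \<theta> C :: real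
  assumes "0 \<le> \<theta>" "\<theta> \<le> 7" "7 \<le> C"
  shows "C / 2 * (\<theta> / C) powr C \<le> 7 / 2 * (\<theta> / 7) ^ 7"
proof -
  have "(\<theta> / C) powr C = (\<theta> / 7) powr C * (7 / C) powr C"
    using assms by (simp add: powr_mult[symmetric])
  also have "\<dots> \<le> (\<theta> / 7) powr 7 * (7 / C) powr 1"
    using assms by (intro mult_mono powr_mono') auto
  also have "\<dots> = (\<theta> / 7) ^ 7 * (7 / C)"
    using assms powr_realpow'[of "\<theta> / 7" 7] by simp
  finally have "C / 2 * (\<theta> / C) powr C \<le> C / 2 * ((\<theta> / 7) ^ 7 * (7 / C))"
    using assms by (intro mult_left_mono) auto
  then show ?thesis using assms by (simp add: field_simps)
qed

lemma half_mult_powr_le_minus_one_minus_ln: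
  fixes x C :: real
  assumes "2 \<le> x" "x \<le> C" "7 \<le> C"
  shows "C / 2 * (x / C) powr C \<le> x - 1 - ln x"
proof (cases "6 \<le> x")
  case True
  have "(x / C) powr C \<le> (x / C) powr 1"
    using assms by (intro powr_mono') auto
  then have "C / 2 * (x / C) powr C \<le> x / 2"
    using assms mult_left_mono[of "(x / C) powr C" "x / C" "C / 2"] by simp
  moreover have "ln x \<le> x / 2 - 1"
  proof -
    have "ln (x / 6) \<le> x / 6 - 1" using True by (intro ln_le_minus_one) auto
    moreover have "ln 6 \<le> ln (exp (2::real))"
      using seven_le_exp_2 by (subst ln_le_cancel_iff) auto
    ultimately show ?thesis using True by (simp add: ln_div)
  qed
  ultimately show ?thesis by linarith
next
  case False
  \<comment> \<open>\<open>(x / C) powr C\<close> is increasing in \<open>x\<close>: round \<open>x\<close> up to 4 or 6 and compare numerically.\<close>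
  define \<theta> :: real where "\<theta> = (if x < 4 then 4 else 6)"
  have "C / 2 * (x / C) powr C \<le> C / 2 * (\<theta> / C) powr C"
    using assms False by (intro mult_left_mono powr_mono2 divide_right_mono) (auto simp: \<theta>_def)
  also have "\<dots> \<le> 7 / 2 * (\<theta> / 7) ^ 7"
    using assms by (intro half_mult_powr_le_at_7) (auto simp: \<theta>_def)
  also have "\<dots> \<le> x - 1 - ln x"
  proof (cases "x < 4")
    case True
    have "ln x \<le> ln 2 + (x / 2 - 1)"
      using ln_le_minus_one[of "x / 2"] assms by (simp add: ln_div)
    then show ?thesis using True assms ln_2_le by (simp add: \<theta>_def power_divide)
  next
    case False
    have "ln x \<le> ln 4 + (x / 4 - 1)"
      using ln_le_minus_one[of "x / 4"] assms False by (simp add: ln_div)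
    moreover have "ln (4::real) = 2 * ln 2" using ln_realpow[of 2 2] by simp
    ultimately show ?thesis using False assms ln_2_le by (simp add: \<theta>_def power_divide)
  qed
  finally show ?thesis .
qed

lemma exp_neg_two_mult_le_one_minus:
  fixes q :: real
  assumes "0 \<le> q" "q \<le> 1/2"
  shows "exp (- 2 * q) \<le> 1 - q"
proof -
  have "q * q \<le> q * (1/2)" using assms by (intro mult_left_mono) auto
  then have "- 2 * q \<le> ln (1 - q)"
    using ln_one_minus_pos_lower_bound[OF assms] by (simp add: power2_eq_square)
  then show ?thesis using assms by (simp add: ln_ge_iff)
qed

lemma binomial_term_ge:
  fixes q :: real
  assumes "0 \<le> q" "q \<le> 1/2" "S \<le> N"
  shows "(N * q / S) ^ S * exp (- 2 * q * N) \<le> real (N choose S) * q ^ S * (1 - q) ^ (N - S)"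
proof (rule mult_mono)
  have "(N * q / S) ^ S = (N / S) ^ S * q ^ S"
    by (simp add: power_mult_distrib[symmetric])
  then show "(N * q / S) ^ S \<le> real (N choose S) * q ^ S"
    using binomial_ge_n_over_k_pow_k[OF assms(3), where 'a = real] assms
    by (simp add: mult_right_mono)
  have "exp (- 2 * q * N) = exp (- 2 * q) ^ N" by (simp add: exp_of_nat_mult[symmetric] mult.commute)
  also have "\<dots> \<le> (1 - q) ^ N" using exp_neg_two_mult_le_one_minus[OF assms(1,2)] by (intro power_mono) auto
  also have "\<dots> \<le> (1 - q) ^ (N - S)" using assms by (intro power_decreasing) auto
  finally show "exp (- 2 * q * N) \<le> (1 - q) ^ (N - S)" .
qed (use assms in auto)

lemma half_mult_powr_le_exp:
  fixes C s :: real
  assumes "7 \<le> C" "1 \<le> s" "S < s + 1"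
  shows "C / 2 * (2 / C) powr (C * s - S) \<le> exp (- 4 * s)"
proof -
  have exponent: "6 * s - 2 \<le> C * s - S - 1"
    using assms mult_right_mono[of 7 C s] by linarith
  have "C / 2 * (2 / C) powr (C * s - S) = (2 / C) powr (C * s - S - 1)"
    using powr_add[of "2 / C" "C * s - S - 1" 1] assms by simp
  also have "\<dots> \<le> (2 / 7) powr (C * s - S - 1)"
    using assms exponent by (intro powr_mono2 divide_left_mono) auto
  also have "\<dots> \<le> (2 / 7) powr (6 * s - 2)"
    using exponent by (intro powr_mono') auto
  also have "\<dots> = exp (- ((6 * s - 2) * ln (7 / 2)))"
    by (simp add: powr_def ln_div algebra_simps)
  also have "\<dots> \<le> exp (- 4 * s)"
  proof -
    have "(6 * s - 2) * 1 \<le> (6 * s - 2) * ln (7 / 2)"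
      using one_le_ln_7_div_2 assms by (intro mult_left_mono) auto
    then have "- ((6 * s - 2) * ln (7 / 2)) \<le> - 4 * s" using assms by (simp add: algebra_simps)
    then show ?thesis by simp
  qed
  finally show ?thesis .
qed

lemma half_mult_powr_le_binomial_term:
  fixes C s \<mu> :: real
  assumes C: "7 \<le> C" and s: "1 \<le> s" "C * s \<le> N" and \<mu>: "0 \<le> \<mu>" "\<mu> \<le> 2 * s"
    and S: "s \<le> S" "S < s + 1"
  shows "C / 2 * (\<mu> / (C * s)) powr (C * s) \<le> real (N choose S) * (\<mu> / N) ^ S * (1 - \<mu> / N) ^ (N - S)"
proof -
  define k where "k = C * s"
  have "7 * s \<le> k" using C s by (simp add: k_def mult_right_mono)
  then have k: "7 * s \<le> k" "S \<le> k" "k \<le> N" using s S unfolding k_def by linarith+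
  have N: "0 < real N" "S \<le> N" using k s by linarith+
  show ?thesis
  proof (cases "\<mu> = 0")
    case True
    then show ?thesis using s S by (simp add: k_def)
  next
    case False
    then have "0 < \<mu>" using \<mu> by simp
    have "(\<mu> / k) powr k = (\<mu> / k) ^ S * (\<mu> / k) powr (k - S)"
      using \<open>0 < \<mu>\<close> k s powr_add[of "\<mu> / k" S "k - S"] by (simp add: powr_realpow)
    also have "\<dots> \<le> (\<mu> / S) ^ S * (2 / C) powr (k - S)"
      using \<open>0 < \<mu>\<close> k s \<mu> C S
      by (intro mult_mono power_mono divide_left_mono powr_mono2) (auto simp: k_def field_simps)
    finally have "C / 2 * (\<mu> / k) powr k \<le> (\<mu> / S) ^ S * (C / 2 * (2 / C) powr (k - S))"
      using C by (simp add: mult_left_mono mult.left_commute)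
    also have "\<dots> \<le> (\<mu> / S) ^ S * exp (- 4 * s)"
      using half_mult_powr_le_exp[OF C s(1) S(2)] \<open>0 < \<mu>\<close>
      by (intro mult_left_mono) (auto simp: k_def)
    also have "\<dots> \<le> (\<mu> / S) ^ S * exp (- 2 * (\<mu> / N) * N)"
      using N \<mu> \<open>0 < \<mu>\<close> by (intro mult_left_mono) auto
    also have "\<dots> \<le> real (N choose S) * (\<mu> / N) ^ S * (1 - \<mu> / N) ^ (N - S)"
      using binomial_term_ge[of "\<mu> / N" S N] N \<mu> k by (simp add: field_simps)
    finally show ?thesis by (simp add: k_def)
  qed
qed

section \<open>Lower tail of a single load\<close>

lemma prob_load_less_le_heavy:
  assumes "finite (set_pmf P)" and C: "7 \<le> C" and s: "1 \<le> s"
    and heavy: "2 * s \<le> n * pmf P i" "n * pmf P i \<le> C * s"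
  shows "measure_pmf.prob (balls_pmf n P) {f. real (load n f i) < s}
           \<le> exp (- (C / 2 * (n * pmf P i / (C * s)) powr (C * s)))"
proof -
  define \<mu> where "\<mu> = n * pmf P i"
  define x where "x = \<mu> / s"
  have \<mu>: "0 < \<mu>" using s heavy by (simp add: \<mu>_def)
  have x: "2 \<le> x" "x \<le> C" using s heavy by (auto simp: x_def \<mu>_def field_simps)
  \<comment> \<open>\<open>s / \<mu>\<close> is the optimal Chernoff parameter.\<close>
  have "measure_pmf.prob (balls_pmf n P) {f. real (load n f i) < s}
      \<le> exp (- (1 - s / \<mu>) * \<mu>) / (s / \<mu>) powr s"
    using assms \<mu> unfolding \<mu>_def by (intro prob_load_less_le_chernoff) auto
  also have "\<dots> = exp (- (s * (x - 1 - ln x)))"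
    using s \<mu> by (simp add: x_def powr_def ln_div exp_diff[symmetric] field_simps)
  also have "\<dots> \<le> exp (- (C / 2 * (\<mu> / (C * s)) powr (C * s)))"
  proof -
    have "C / 2 * (x / C) powr (C * s) \<le> C / 2 * (x / C) powr C"
      using x C s by (intro mult_left_mono powr_mono') auto
    also have "\<dots> \<le> x - 1 - ln x"
      using x C by (rule half_mult_powr_le_minus_one_minus_ln)
    also have "\<dots> \<le> s * (x - 1 - ln x)"
      using s x ln_le_minus_one[of x] by (simp add: mult_le_cancel_right1)
    finally show ?thesis using s C by (simp add: x_def mult.commute)
  qed
  finally show ?thesis by (simp add: \<mu>_def)
qed

lemma prob_load_less_le_light:
  assumes C: "7 \<le> C" and s: "1 \<le> s" "C * s \<le> n" and light: "n * pmf P i \<le> 2 * s"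
  shows "measure_pmf.prob (balls_pmf n P) {f. real (load n f i) < s}
           \<le> exp (- (C / 2 * (n * pmf P i / (C * s)) powr (C * s)))"
proof -
  define S where "S = nat \<lceil>s\<rceil>"
  have S: "s \<le> S" "S < s + 1" using s ceiling_correct[of s] by (auto simp: S_def)
  have "0 < real n" using C s mult_right_mono[of 7 C s] by linarith
  define \<tau> where "\<tau> = real (n choose S) * pmf P i ^ S * (1 - pmf P i) ^ (n - S)"
  have "{f. real (load n f i) < s} \<subseteq> - {f. load n f i = S}" using S by auto
  then have "measure_pmf.prob (balls_pmf n P) {f. real (load n f i) < s}
      \<le> measure_pmf.prob (balls_pmf n P) (- {f. load n f i = S})"
    by (rule measure_pmf.finite_measure_mono) simp
  also have "\<dots> = 1 - \<tau>"
    using measure_pmf.prob_compl[of "{f. load n f i = S}" "balls_pmf n P"]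
    by (simp add: \<tau>_def prob_load_eq Compl_eq_Diff_UNIV)
  also have "\<dots> \<le> exp (- \<tau>)"
    using exp_ge_add_one_self[of "- \<tau>"] by linarith
  also have "\<dots> \<le> exp (- (C / 2 * (n * pmf P i / (C * s)) powr (C * s)))"
    using half_mult_powr_le_binomial_term[OF C s, of "n * pmf P i" S] light S \<open>0 < real n\<close>
    by (simp add: \<tau>_def)
  finally show ?thesis .
qed

lemma prob_load_less_le:
  assumes "finite (set_pmf P)" "7 \<le> C" "1 \<le> s" "C * s \<le> n" "n * pmf P i \<le> C * s"
  shows "measure_pmf.prob (balls_pmf n P) {f. real (load n f i) < s}
           \<le> exp (- (C / 2 * (n * pmf P i / (C * s)) powr (C * s)))"
  using assms prob_load_less_le_heavy[of P C s n i] prob_load_less_le_light[of C s n P i]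
  by (cases "2 * s \<le> n * pmf P i") auto

section \<open>The maximum load\<close>

lemma max_load_less_iff:
  assumes "1 \<le> m"
  shows "real (max_load n m f) < s \<longleftrightarrow> (\<forall>i\<in>{1..m}. real (load n f i) < s)"
proof -
  have "max_load n m f \<in> load n f ` {1..m}"
    unfolding max_load_def using assms by (intro Max_in) auto
  moreover have "load n f i \<le> max_load n m f" if "i \<in> {1..m}" for i
    unfolding max_load_def using that by (intro Max_ge) auto
  ultimately show ?thesis by force
qed

lemma sum_pmf_powr_eq_of_pnorm_eq:
  assumes "0 < n" "0 < k" "k / pnorm m P k = real n"
  shows "(\<Sum>i=1..m. pmf P i powr k) = (k / n) powr k"
proof -
  have "pnorm m P k \<noteq> 0" using assms by auto
  then have "pnorm m P k = k / n" using assms by (simp add: field_simps)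
  moreover have "pnorm m P k powr k = (\<Sum>i=1..m. pmf P i powr k)"
    using assms by (simp add: pnorm_def powr_powr sum_nonneg)
  ultimately show ?thesis by simp
qed

lemma pmf_le_of_sum_pmf_powr_eq:
  assumes "finite Y" "set_pmf P \<subseteq> Y" "0 < k" "0 \<le> \<nu>" "(\<Sum>i\<in>Y. pmf P i powr k) = \<nu> powr k"
  shows "pmf P i \<le> \<nu>"
proof (cases "i \<in> Y")
  case True
  have "pmf P i powr k \<le> \<nu> powr k"
    using assms True by (metis member_le_sum powr_ge_zero)
  then show ?thesis
    using assms powr_less_mono2[of k \<nu> "pmf P i"] by (meson not_le pmf_nonneg)
next
  case False
  then have "pmf P i = 0" using assms(2) by (meson in_mono set_pmf_iff)
  then show ?thesis using assms(4) by simp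
qed

lemma le_one_of_sum_pmf_powr_eq:
  assumes "finite Y" "set_pmf P \<subseteq> Y" "1 \<le> k" "0 \<le> \<nu>" "(\<Sum>i\<in>Y. pmf P i powr k) = \<nu> powr k"
  shows "\<nu> \<le> 1"
proof -
  have "(\<Sum>i\<in>Y. pmf P i powr k) \<le> (\<Sum>i\<in>Y. pmf P i powr 1)"
    using assms by (intro sum_mono powr_mono') (auto simp: pmf_le_1)
  also have "\<dots> = 1" using assms by (simp add: sum_pmf_eq_1)
  finally have "\<nu> powr k \<le> 1 powr k" using assms by simp
  then show ?thesis
    using assms powr_less_mono2[of k 1 \<nu>] by linarith
qed

lemma prob_max_load_ge_le:
  assumes m: "1 \<le> m" "set_pmf P \<subseteq> {1..m}" and n: "0 < n" and k: "0 < k"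
    and norm: "(\<Sum>i=1..m. pmf P i powr k) = (k / n) powr k" and \<delta>: "0 < \<delta>" "\<delta> \<le> 1"
  shows "measure_pmf.prob (balls_pmf n P) {f. exp 1 / \<delta> * k \<le> real (max_load n m f)} \<le> \<delta>"
proof -
  define \<nu> where "\<nu> = k / n"
  define T where "T = nat \<lceil>exp 1 / \<delta> * k\<rceil>"
  have "1 \<le> exp 1 / \<delta>" using \<delta> exp_ge_add_one_self[of 1] by (simp add: field_simps)
  then have "1 * k \<le> exp 1 / \<delta> * k" using k by (intro mult_right_mono) auto
  then have T: "exp 1 / \<delta> * k \<le> T" "k \<le> T" "1 \<le> T"
    using k unfolding T_def by linarith+
  have "{f. exp 1 / \<delta> * k \<le> real (max_load n m f)} \<subseteq> (\<Union>i\<in>{1..m}. {f. T \<le> load n f i})"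
  proof
    fix f assume "f \<in> {f. exp 1 / \<delta> * k \<le> real (max_load n m f)}"
    then obtain i where "i \<in> {1..m}" "exp 1 / \<delta> * k \<le> real (load n f i)"
      using max_load_less_iff[OF m(1), of n f "exp 1 / \<delta> * k"] by (auto simp: not_less)
    then show "f \<in> (\<Union>i\<in>{1..m}. {f. T \<le> load n f i})"
      unfolding T_def by (auto simp: ceiling_le_iff nat_le_iff)
  qed
  then have "measure_pmf.prob (balls_pmf n P) {f. exp 1 / \<delta> * k \<le> real (max_load n m f)}
      \<le> (\<Sum>i=1..m. measure_pmf.prob (balls_pmf n P) {f. T \<le> load n f i})"
    by (intro order.trans[OF measure_pmf.finite_measure_mono
          measure_pmf.finite_measure_subadditive_finite]) auto
  also have "\<dots> \<le> real (n choose T) * (\<Sum>i=1..m. pmf P i powr T)"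
    using T(3) by (simp add: sum_distrib_left powr_realpow' sum_mono prob_load_ge_le)
  also have "(\<Sum>i=1..m. pmf P i powr T) \<le> \<nu> ^ T"
  proof -
    have "pmf P i \<le> \<nu>" for i
      using m n k norm by (intro pmf_le_of_sum_pmf_powr_eq[of "{1..m}"]) (auto simp: \<nu>_def)
    then have "(\<Sum>i=1..m. pmf P i powr T) \<le> \<nu> powr (T - k) * (\<Sum>i=1..m. pmf P i powr k)"
      using T by (intro sum_powr_le_scaled_sum_powr) auto
    also have "\<dots> = \<nu> powr (T - k) * \<nu> powr k"
      using norm by (simp add: \<nu>_def)
    also have "\<dots> = \<nu> ^ T"
      using n k T by (simp add: \<nu>_def powr_realpow' flip: powr_add)
    finally show ?thesis .
  qed
  also have "real (n choose T) * \<nu> ^ T \<le> (exp 1 * n / T) ^ T * \<nu> ^ T"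
    using n k by (intro mult_right_mono binomial_le_exp_mult_div_power) (simp add: \<nu>_def)
  also have "\<dots> = (exp 1 * k / T) ^ T"
    using n by (simp add: \<nu>_def power_mult_distrib[symmetric])
  also have "\<dots> \<le> \<delta> ^ T"
    using T \<delta> k by (intro power_mono) (auto simp: field_simps)
  also have "\<dots> \<le> \<delta>"
    using T \<delta> power_decreasing[of 1 T \<delta>] by simp
  finally show ?thesis by (simp add: mult_left_mono)
qed

lemma prob_max_load_less_le:
  assumes m: "1 \<le> m" "set_pmf P \<subseteq> {1..m}" and n: "0 < n" and k: "1 \<le> k"
    and norm: "(\<Sum>i=1..m. pmf P i powr k) = (k / n) powr k" and C: "7 \<le> C"
  shows "measure_pmf.prob (balls_pmf n P) {f. real (max_load n m f) < k / C} \<le> exp (- C / 2)"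
proof (cases "k / C < 1")
  case True
  have "\<not> real (max_load n m f) < k / C" if "f \<in> set_pmf (balls_pmf n P)" for f
  proof -
    have "f 0 \<in> {1..m}" using that n m(2) by (auto simp: set_pmf_balls_pmf PiE_dflt_def)
    moreover have "1 \<le> load n f (f 0)" using n by (auto simp: load_def card_gt_0_iff Suc_le_eq)
    then have "k / C < real (load n f (f 0))" using True by linarith
    ultimately show ?thesis unfolding max_load_less_iff[OF m(1)] by (auto intro!: bexI[of _ "f 0"])
  qed
  then have "measure_pmf.prob (balls_pmf n P) {f. real (max_load n m f) < k / C} = 0"
    by (auto simp: measure_pmf_zero_iff disjnt_def)
  then show ?thesis by simp
next
  case False
  define s where "s = k / C"
  have s: "1 \<le> s" "C * s = k" using False C by (auto simp: s_def)
  have fin: "finite (set_pmf P)" using m(2) finite_subset by blast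
  have "k \<le> n"
    using m n k norm le_one_of_sum_pmf_powr_eq[of "{1..m}" P k "k / n"] by (simp add: field_simps)
  have "n * pmf P i \<le> k" for i
    using m n k norm pmf_le_of_sum_pmf_powr_eq[of "{1..m}" P k "k / n" i] by (simp add: field_simps)
  have "measure_pmf.prob (balls_pmf n P) {f. real (max_load n m f) < s}
      = measure_pmf.prob (balls_pmf n P) {f. \<forall>i\<in>{1..m}. real (load n f i) < s}"
    by (simp add: max_load_less_iff[OF m(1)])
  also have "\<dots> \<le> (\<Prod>i=1..m. measure_pmf.prob (balls_pmf n P) {f. real (load n f i) < s})"
    using fin by (rule prob_loads_below_le_prod[where s = "\<lambda>_. s", OF finite_atLeastAtMost])
  also have "\<dots> \<le> (\<Prod>i=1..m. exp (- (C / 2 * (n * pmf P i / k) powr k)))"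
  proof (intro prod_mono conjI measure_nonneg)
    fix i
    show "measure_pmf.prob (balls_pmf n P) {f. real (load n f i) < s}
        \<le> exp (- (C / 2 * (n * pmf P i / k) powr k))"
      using prob_load_less_le[OF fin C s(1), of n i] s(2) \<open>k \<le> n\<close> \<open>n * pmf P i \<le> k\<close>
      by simp
  qed
  also have "\<dots> = exp (- (C / 2 * (\<Sum>i=1..m. (n / k) powr k * pmf P i powr k)))"
    by (simp add: exp_sum[symmetric] sum_negf sum_distrib_left powr_mult powr_divide field_simps)
  also have "(\<Sum>i=1..m. (n / k) powr k * pmf P i powr k) = (n / k * (k / n)) powr k"
    by (simp only: norm powr_mult flip: sum_distrib_left)
  also have "\<dots> = 1" using n k by simp
  finally show ?thesis by (simp add: s_def)
qed

theorem corollary4: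
  fixes n m :: nat and P :: "nat pmf" and kstar \<delta> :: real
  assumes "n \<ge> 1" and "m \<ge> 2"
    and "set_pmf P \<subseteq> {1..m}"
    and "kstar \<ge> 1" and "kstar / pnorm m P kstar = real n"
    and "0 < \<delta>" and "\<delta> < 1"
  shows "measure_pmf.prob (balls_pmf n P)
           {f. real (max_load n m f) \<ge> (exp 1 / \<delta>) * kstar} \<le> \<delta> \<and>
         measure_pmf.prob (balls_pmf n P)
           {f. real (max_load n m f) \<ge> kstar / max ((exp 1)\<^sup>2) (2 * ln (1 / \<delta>))} \<ge> 1 - \<delta>"
proof -
  define C where "C = max ((exp 1)\<^sup>2) (2 * ln (1 / \<delta>))"
  have m: "1 \<le> m" and n: "0 < n" using assms by auto
  have norm: "(\<Sum>i=1..m. pmf P i powr kstar) = (kstar / n) powr kstar"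
    using assms by (intro sum_pmf_powr_eq_of_pnorm_eq) auto
  have "7 \<le> C" using seven_le_exp_2 by (simp add: C_def flip: exp_double)
  have "exp (- C / 2) \<le> \<delta>"
    using \<open>0 < \<delta>\<close> exp_le_cancel_iff[of "- C / 2" "ln \<delta>"] by (simp add: C_def ln_div)
  then have "measure_pmf.prob (balls_pmf n P) {f. real (max_load n m f) < kstar / C} \<le> \<delta>"
    using prob_max_load_less_le[OF m assms(3) n assms(4) norm \<open>7 \<le> C\<close>] by linarith
  then have "1 - \<delta> \<le> measure_pmf.prob (balls_pmf n P) {f. kstar / C \<le> real (max_load n m f)}"
    using measure_pmf.prob_compl[of "{f. real (max_load n m f) < kstar / C}" "balls_pmf n P"]
    by (simp add: Compl_eq_Diff_UNIV[symmetric] not_less Collect_neg_eq[symmetric])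
  moreover have "measure_pmf.prob (balls_pmf n P) {f. exp 1 / \<delta> * kstar \<le> real (max_load n m f)} \<le> \<delta>"
    using assms by (intro prob_max_load_ge_le[OF m assms(3) n _ norm]) auto
  ultimately show ?thesis by (simp add: C_def)
qed

end
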